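(* Consider the queueing system in the context under MaxWeight with a diagonal matrix $\Delta$ with positive diagonal entries, in overload ($\rho\notin\mathcal{P}$). Let $H=\limsup_{t\to\infty}\langle \frac{X(t)}{t},\Delta\frac{X(t)}{t}\rangle$ and let $\eta$ be the limit of $X(t_c)/t_c$ along an increasing unbounded sequence $\{t_c\}$ with $\langle\eta,\Delta\eta\rangle=H$. Then for every $\epsilon\in(0,1)$, $$-\Big[\langle\rho,\Delta\eta\rangle-\max_{S\in\mathcal{S}}\langle S,\Delta\eta\rangle\Big]\frac{\epsilon}{1-\epsilon}+\langle\eta,\Delta\eta\rangle\frac{1}{1-\epsilon}\ge\langle\eta,\Delta\eta\rangle.$$
   Context: Model: $Q$ queues, finite set $\mathcal{S}=\{S_1,\dots,S_N\}\subset\mathbb{R}^Q_{\ge0}$, discrete time. Arrivals $A(t)$ with $0\le A_q(t)\le\bar A_q<\infty$ and $\rho_q=\lim_{t\to\infty}\frac1t\sum_{s=0}^{t-1}A_q(s)\in(0,\infty)$. Departures $D_q(t)=\min\{S_q(t),X_q(t)\}$, $X(t+1)=X(t)+A(t)-D(t)$, $X(0)=0$, with $S(t)\in\arg\max_{S\in\mathcal{S}}\langle S,\Delta X(t)\rangle$. Stability region $\mathcal{P}=\{r\in\mathbb{R}^Q_{\ge0}: r\le\sum_n\alpha_nS_n\text{ for some }\alpha_n\ge0,\sum_n\alpha_n=1\}$. *)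

theory Defs
  imports "HOL-Analysis.Analysis"
begin

text \<open>Vectors in R^Q are functions from a finite index type 'q of queues to real.
  The diagonal matrix Delta is represented by its diagonal d.\<close>

definition ip :: "('q::finite \<Rightarrow> real) \<Rightarrow> ('q \<Rightarrow> real) \<Rightarrow> real" where
  "ip x y = (\<Sum>q\<in>UNIV. x q * y q)"

definition diagm :: "('q::finite \<Rightarrow> real) \<Rightarrow> ('q \<Rightarrow> real) \<Rightarrow> ('q \<Rightarrow> real)" where
  "diagm d x = (\<lambda>q. d q * x q)"

definition stab_region :: "('q::finite \<Rightarrow> real) set \<Rightarrow> ('q \<Rightarrow> real) set" where
  "stab_region Ss = {r. (\<forall>q. 0 \<le> r q) \<and>
     (\<exists>\<alpha>. (\<forall>S\<in>Ss. 0 \<le> \<alpha> S) \<and> (\<Sum>S\<in>Ss. \<alpha> S) = 1 \<and>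
          (\<forall>q. r q \<le> (\<Sum>S\<in>Ss. \<alpha> S * S q)))}"

definition maxweight_system ::
  "('q::finite \<Rightarrow> real) set \<Rightarrow> ('q \<Rightarrow> real) \<Rightarrow> (nat \<Rightarrow> 'q \<Rightarrow> real) \<Rightarrow> ('q \<Rightarrow> real)
   \<Rightarrow> ('q \<Rightarrow> real) \<Rightarrow> (nat \<Rightarrow> 'q \<Rightarrow> real) \<Rightarrow> (nat \<Rightarrow> 'q \<Rightarrow> real) \<Rightarrow> bool" where
  "maxweight_system Ss d A Abar \<rho> S X \<longleftrightarrow>
     finite Ss \<and> Ss \<noteq> {} \<and> (\<forall>s\<in>Ss. \<forall>q. 0 \<le> s q) \<and>
     (\<forall>t q. 0 \<le> A t q \<and> A t q \<le> Abar q) \<and>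
     (\<forall>q. ((\<lambda>t. (\<Sum>s<t. A s q) / real t) \<longlonglongrightarrow> \<rho> q) \<and> 0 < \<rho> q) \<and>
     X 0 = (\<lambda>q. 0) \<and>
     (\<forall>t. S t \<in> Ss \<and> (\<forall>s\<in>Ss. ip s (diagm d (X t)) \<le> ip (S t) (diagm d (X t)))) \<and>
     (\<forall>t q. X (Suc t) q = X t q + A t q - min (S t q) (X t q))"

end

theory Submission
  imports Defs "HOL-Real_Asymp.Real_Asymp"
begin

text \<open>Over the window from \<open>t\<^sub>c\<close> to \<open>(1 + e) t\<^sub>c\<close> the rescaled queue
  \<open>Z = X((1 + e) t\<^sub>c) / t\<^sub>c\<close> moves away from \<open>\<eta>\<close> by about \<open>e \<rho>\<close> of arrivals minus a
  service whose \<open>\<Delta>\<eta>\<close>-weight is at most \<open>e max\<^sub>S \<langle>S, \<Delta>\<eta>\<rangle>\<close>. The quadratic form lies above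
  its tangent at \<open>\<eta>\<close>, so \<open>\<langle>Z, \<Delta>Z\<rangle> \<ge> H + 2 \<langle>Z - \<eta>, \<Delta>\<eta>\<rangle>\<close>, while \<open>\<langle>Z, \<Delta>Z\<rangle>\<close> is \<open>(1 + e)\<^sup>2\<close>
  times the scaled energy at time \<open>(1 + e) t\<^sub>c\<close>, asymptotically at most \<open>(1 + e)\<^sup>2 H\<close> by the
  limsup. Hence \<open>H + 2 e (\<langle>\<rho>, \<Delta>\<eta>\<rangle> - max\<^sub>S \<langle>S, \<Delta>\<eta>\<rangle>) \<le> (1 + e)\<^sup>2 H\<close>, and \<open>e \<rightarrow> 0\<close> gives
  \<open>\<langle>\<rho>, \<Delta>\<eta>\<rangle> - max\<^sub>S \<langle>S, \<Delta>\<eta>\<rangle> \<le> H\<close>, which is the claim rearranged.\<close>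

lemma maxweight_queue_nonneg:
  assumes sys: "maxweight_system Ss d A Abar \<rho> S X"
  shows "0 \<le> X t q"
proof (induction t)
  case 0
  then show ?case using sys by (simp add: maxweight_system_def)
next
  case (Suc t)
  have "X (Suc t) q = X t q + A t q - min (S t q) (X t q)" and "0 \<le> A t q"
    using sys by (auto simp: maxweight_system_def)
  then show ?case by linarith
qed

lemma maxweight_queue_shift:
  assumes sys: "maxweight_system Ss d A Abar \<rho> S X" and "t \<le> t'"
  shows "X t' q = X t q + (\<Sum>u\<in>{t..<t'}. A u q) - (\<Sum>u\<in>{t..<t'}. min (S u q) (X u q))"
  using \<open>t \<le> t'\<close>
proof (induction t' rule: dec_induct)
  case (step t')
  have "X (Suc t') q = X t' q + A t' q - min (S t' q) (X t' q)"
    using sys by (simp add: maxweight_system_def)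
  then show ?case using step by simp
qed simp

lemma ip_diagm_self_nonneg:
  assumes "\<forall>q. 0 \<le> d q"
  shows "0 \<le> ip x (diagm d x)"
  unfolding ip_def diagm_def using assms
  by (intro sum_nonneg) (simp add: mult.left_commute)

lemma ip_diagm_tangent_le:
  assumes "\<forall>q. 0 \<le> d q"
  shows "ip y (diagm d y) + 2 * ip (\<lambda>q. z q - y q) (diagm d y) \<le> ip z (diagm d z)"
proof -
  have "y q * (d q * y q) + 2 * ((z q - y q) * (d q * y q)) \<le> z q * (d q * z q)" for q
  proof -
    have "0 \<le> d q * (z q - y q)\<^sup>2" using assms by simp
    then show ?thesis by (simp add: power2_eq_square algebra_simps)
  qed
  then show ?thesis
    unfolding ip_def diagm_def sum_distrib_left sum.distrib[symmetric] by (rule sum_mono)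
qed

lemma maxweight_service_le_Max:
  assumes sys: "maxweight_system Ss d A Abar \<rho> S X"
    and w: "\<forall>q. 0 \<le> w q"
  shows "ip (\<lambda>q. min (S u q) (X u q)) w \<le> (MAX s\<in>Ss. ip s w)"
proof -
  have "ip (\<lambda>q. min (S u q) (X u q)) w \<le> ip (S u) w"
    unfolding ip_def using w by (intro sum_mono mult_right_mono) auto
  also have "\<dots> \<le> (MAX s\<in>Ss. ip s w)"
    using sys by (intro Max_ge) (auto simp: maxweight_system_def)
  finally show ?thesis .
qed

lemma maxweight_window_bound:
  assumes sys: "maxweight_system Ss d A Abar \<rho> S X"
    and d: "\<forall>q. 0 \<le> d q" and \<eta>: "\<forall>q. 0 \<le> \<eta> q"
    and t: "0 < t" "t \<le> t'"
  shows "ip \<eta> (diagm d \<eta>)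
           + 2 * (ip (\<lambda>q. X t q / real t - \<eta> q) (diagm d \<eta>)
                  + ip (\<lambda>q. (\<Sum>u\<in>{t..<t'}. A u q) / real t) (diagm d \<eta>)
                  - real (t' - t) / real t * (MAX s\<in>Ss. ip s (diagm d \<eta>)))
         \<le> (real t' / real t)\<^sup>2 * ip (\<lambda>q. X t' q / real t') (diagm d (\<lambda>q. X t' q / real t'))"
proof -
  define Z where "Z q = X t' q / real t" for q
    \<comment> \<open>rescaled by \<open>t\<close>, not \<open>t'\<close>, so that \<open>Z - X t / t\<close> is the window increment\<close>
  define served where "served q = (\<Sum>u\<in>{t..<t'}. min (S u q) (X u q)) / real t" for q
  define M where "M = (MAX s\<in>Ss. ip s (diagm d \<eta>))"
  have w: "\<forall>q. 0 \<le> diagm d \<eta> q" using d \<eta> by (simp add: diagm_def)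
  have increment: "(\<lambda>q. Z q - \<eta> q) = (\<lambda>q. (X t q / real t - \<eta> q) + (\<Sum>u\<in>{t..<t'}. A u q) / real t - served q)"
    using maxweight_queue_shift[OF sys t(2)]
    by (auto simp: Z_def served_def diff_divide_distrib add_divide_distrib)
  have drift: "ip (\<lambda>q. Z q - \<eta> q) (diagm d \<eta>)
      = ip (\<lambda>q. X t q / real t - \<eta> q) (diagm d \<eta>)
        + ip (\<lambda>q. (\<Sum>u\<in>{t..<t'}. A u q) / real t) (diagm d \<eta>) - ip served (diagm d \<eta>)"
    unfolding increment ip_def by (simp add: ring_distribs sum.distrib sum_subtractf)
  have "ip served (diagm d \<eta>) = (\<Sum>u\<in>{t..<t'}. ip (\<lambda>q. min (S u q) (X u q)) (diagm d \<eta>)) / real t"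
    unfolding served_def ip_def
    by (simp add: sum_divide_distrib sum_distrib_left sum.swap[of _ "{t..<t'}"] algebra_simps)
  also have "\<dots> \<le> (\<Sum>u\<in>{t..<t'}. M) / real t"
    unfolding M_def using maxweight_service_le_Max[OF sys w]
    by (intro divide_right_mono sum_mono) auto
  finally have service: "ip served (diagm d \<eta>) \<le> real (t' - t) / real t * M" by simp
  have "ip Z (diagm d Z) = (real t' / real t)\<^sup>2 * ip (\<lambda>q. X t' q / real t') (diagm d (\<lambda>q. X t' q / real t'))"
    using t unfolding Z_def ip_def diagm_def
    by (simp add: sum_distrib_left power2_eq_square field_simps)
  moreover have "ip \<eta> (diagm d \<eta>) + 2 * ip (\<lambda>q. Z q - \<eta> q) (diagm d \<eta>) \<le> ip Z (diagm d Z)"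
    using ip_diagm_tangent_le[OF d] .
  ultimately show ?thesis using drift service unfolding M_def by argo
qed

lemma exists_window_ratio_tendsto:
  fixes T :: "nat \<Rightarrow> nat"
  assumes T: "filterlim T at_top sequentially" and e: "0 < e"
  shows "\<exists>T'. (\<forall>c. T c \<le> T' c) \<and> (\<lambda>c. real (T' c) / real (T c)) \<longlonglongrightarrow> 1 + e"
proof (intro exI conjI allI)
  define T' where "T' c = T c + nat \<lfloor>e * real (T c)\<rfloor>" for c
  show "T c \<le> T' c" for c by (simp add: T'_def)
  have "((\<lambda>x::real. of_int \<lfloor>e * x\<rfloor> / x) \<longlongrightarrow> e) at_top"
    using e by real_asymp
  then have floor: "(\<lambda>c. of_int \<lfloor>e * real (T c)\<rfloor> / real (T c)) \<longlonglongrightarrow> e"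
    by (rule filterlim_compose) (rule filterlim_compose[OF filterlim_real_sequentially T])
  have "eventually (\<lambda>c. 0 < T c) sequentially"
    using eventually_compose_filterlim[OF eventually_gt_at_top T] .
  then have "eventually (\<lambda>c. 1 + of_int \<lfloor>e * real (T c)\<rfloor> / real (T c) = real (T' c) / real (T c))
      sequentially"
    by eventually_elim (use e in \<open>simp add: T'_def field_simps\<close>)
  with tendsto_add[OF tendsto_const floor]
  show "(\<lambda>c. real (T' c) / real (T c)) \<longlonglongrightarrow> 1 + e"
    by (rule Lim_transform_eventually)
qed

lemma window_average_tendsto:
  fixes f :: "nat \<Rightarrow> real" and T T' :: "nat \<Rightarrow> nat"
  assumes avg: "(\<lambda>t. (\<Sum>s<t. f s) / real t) \<longlonglongrightarrow> r"
    and T: "filterlim T at_top sequentially" and le: "\<And>c. T c \<le> T' c"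
    and ratio: "(\<lambda>c. real (T' c) / real (T c)) \<longlonglongrightarrow> L"
  shows "(\<lambda>c. (\<Sum>u\<in>{T c..<T' c}. f u) / real (T c)) \<longlonglongrightarrow> (L - 1) * r"
proof -
  have T': "filterlim T' at_top sequentially"
    using filterlim_at_top_mono[OF T] le by simp
  have avg_T: "(\<lambda>c. (\<Sum>s<T c. f s) / real (T c)) \<longlonglongrightarrow> r"
    using filterlim_compose[OF avg T] .
  have avg_T': "(\<lambda>c. (\<Sum>s<T' c. f s) / real (T' c)) \<longlonglongrightarrow> r"
    using filterlim_compose[OF avg T'] .
  have "eventually (\<lambda>c. 0 < T c) sequentially"
    using eventually_compose_filterlim[OF eventually_gt_at_top T] .
  then have "eventually (\<lambda>c. (\<Sum>s<T' c. f s) / real (T' c) * (real (T' c) / real (T c))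
                          - (\<Sum>s<T c. f s) / real (T c)
                         = (\<Sum>u\<in>{T c..<T' c}. f u) / real (T c)) sequentially"
  proof eventually_elim
    case (elim c)
    then have "0 < T' c" using le[of c] by linarith
    then show ?case
      using sum_diff_nat_ivl[OF le0 le[of c], of f]
      by (simp add: atLeast0LessThan flip: diff_divide_distrib)
  qed
  moreover have "(\<lambda>c. (\<Sum>s<T' c. f s) / real (T' c) * (real (T' c) / real (T c))
                     - (\<Sum>s<T c. f s) / real (T c)) \<longlonglongrightarrow> (L - 1) * r"
    using tendsto_diff[OF tendsto_mult[OF avg_T' ratio] avg_T] by (simp add: algebra_simps)
  ultimately show ?thesis by (rule Lim_transform_eventually[rotated])
qed

lemma tendsto_ip_left:
  assumes "\<And>q. ((\<lambda>c. x c q) \<longlongrightarrow> y q) F"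
  shows "((\<lambda>c. ip (x c) w) \<longlongrightarrow> ip y w) F"
  unfolding ip_def using assms by (intro tendsto_intros)

lemma maxweight_drift_bound:
  fixes Ss :: "('q::finite \<Rightarrow> real) set" and T :: "nat \<Rightarrow> nat"
  assumes sys: "maxweight_system Ss d A Abar \<rho> S X"
    and d: "\<forall>q. 0 \<le> d q"
    and T: "filterlim T at_top sequentially"
    and eta_lim: "\<forall>q. ((\<lambda>c. X (T c) q / real (T c)) \<longlonglongrightarrow> \<eta> q)"
    and limsup: "limsup (\<lambda>t. ereal (ip (\<lambda>q. X t q / real t) (diagm d (\<lambda>q. X t q / real t))))
                   \<le> ereal (ip \<eta> (diagm d \<eta>))"
    and e: "0 < e" and \<delta>: "0 < \<delta>"
  shows "ip \<eta> (diagm d \<eta>) + 2 * e * (ip \<rho> (diagm d \<eta>) - (MAX s\<in>Ss. ip s (diagm d \<eta>)))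
           \<le> (1 + e)\<^sup>2 * (ip \<eta> (diagm d \<eta>) + \<delta>)"
proof -
  define H where "H = ip \<eta> (diagm d \<eta>)"
  define M where "M = (MAX s\<in>Ss. ip s (diagm d \<eta>))"
  define W where "W t = ip (\<lambda>q. X t q / real t) (diagm d (\<lambda>q. X t q / real t))" for t
  obtain T' where le: "\<And>c. T c \<le> T' c"
    and ratio: "(\<lambda>c. real (T' c) / real (T c)) \<longlonglongrightarrow> 1 + e"
    using exists_window_ratio_tendsto[OF T e] by blast
  have T': "filterlim T' at_top sequentially"
    using filterlim_at_top_mono[OF T] le by simp
  have \<eta>: "\<forall>q. 0 \<le> \<eta> q"
    using eta_lim maxweight_queue_nonneg[OF sys]
    by (blast intro: LIMSEQ_le_const divide_nonneg_nonneg of_nat_0_le_iff)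
  have Tpos: "eventually (\<lambda>c. 0 < T c) sequentially"
    using eventually_compose_filterlim[OF eventually_gt_at_top T] .
  have "limsup (\<lambda>t. ereal (W t)) < ereal (H + \<delta>)"
    using limsup \<delta> unfolding W_def H_def by (simp add: order.strict_trans1)
  then have "eventually (\<lambda>t. W t < H + \<delta>) sequentially"
    using Limsup_lessD by fastforce
  then have W_bound: "eventually (\<lambda>c. W (T' c) < H + \<delta>) sequentially"
    using eventually_compose_filterlim[OF _ T'] by blast
  define g where "g c = H + 2 * (ip (\<lambda>q. X (T c) q / real (T c) - \<eta> q) (diagm d \<eta>)
      + ip (\<lambda>q. (\<Sum>u\<in>{T c..<T' c}. A u q) / real (T c)) (diagm d \<eta>)
      - real (T' c - T c) / real (T c) * M)" for c
  have "eventually (\<lambda>c. g c \<le> (real (T' c) / real (T c))\<^sup>2 * (H + \<delta>)) sequentially"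
    using Tpos W_bound
  proof eventually_elim
    case (elim c)
    have "g c \<le> (real (T' c) / real (T c))\<^sup>2 * W (T' c)"
      unfolding g_def H_def M_def W_def using maxweight_window_bound[OF sys d \<eta> elim(1) le] .
    also have "\<dots> \<le> (real (T' c) / real (T c))\<^sup>2 * (H + \<delta>)"
      using elim(2) by (intro mult_left_mono) auto
    finally show ?case .
  qed
  moreover have "(\<lambda>c. (real (T' c) / real (T c))\<^sup>2 * (H + \<delta>)) \<longlonglongrightarrow> (1 + e)\<^sup>2 * (H + \<delta>)"
    by (intro tendsto_intros ratio)
  moreover have "g \<longlonglongrightarrow> H + 2 * (ip (\<lambda>q. 0) (diagm d \<eta>) + ip (\<lambda>q. e * \<rho> q) (diagm d \<eta>) - e * M)"
  proof -
    have arrivals: "(\<lambda>c. (\<Sum>u\<in>{T c..<T' c}. A u q) / real (T c)) \<longlonglongrightarrow> e * \<rho> q" for q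
      using window_average_tendsto[OF _ T le ratio] sys by (simp add: maxweight_system_def)
    have "eventually (\<lambda>c. real (T' c) / real (T c) - 1 = real (T' c - T c) / real (T c)) sequentially"
      using Tpos by eventually_elim (simp add: le of_nat_diff diff_divide_distrib)
    with tendsto_diff[OF ratio tendsto_const[of 1]]
    have "(\<lambda>c. real (T' c - T c) / real (T c)) \<longlonglongrightarrow> e"
      by (simp add: Lim_transform_eventually)
    then show ?thesis
      unfolding g_def using eta_lim arrivals
      by (intro tendsto_intros tendsto_ip_left) (simp_all add: LIM_zero)
  qed
  ultimately have "H + 2 * (ip (\<lambda>q. 0) (diagm d \<eta>) + ip (\<lambda>q. e * \<rho> q) (diagm d \<eta>) - e * M)
      \<le> (1 + e)\<^sup>2 * (H + \<delta>)"
    using tendsto_le[OF trivial_limit_sequentially] by blast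
  then show ?thesis
    unfolding H_def M_def ip_def by (simp add: sum_distrib_left algebra_simps)
qed

lemma le_of_forall_growth_bound:
  fixes a H :: real
  assumes H: "0 \<le> H"
    and bound: "\<And>e \<delta>. 0 < e \<Longrightarrow> 0 < \<delta> \<Longrightarrow> H + 2 * e * a \<le> (1 + e)\<^sup>2 * (H + \<delta>)"
  shows "a \<le> H"
proof -
  have growth: "H + 2 * e * a \<le> (1 + e)\<^sup>2 * H" if e: "0 < e" for e
  proof (rule field_le_epsilon)
    fix x :: real
    assume "0 < x"
    then have "H + 2 * e * a \<le> (1 + e)\<^sup>2 * (H + x / (1 + e)\<^sup>2)"
      using bound e by simp
    also have "\<dots> = (1 + e)\<^sup>2 * H + x"
      using e by (simp add: field_simps)
    finally show "H + 2 * e * a \<le> (1 + e)\<^sup>2 * H + x" .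
  qed
  show ?thesis
  proof (rule field_le_epsilon)
    fix x :: real
    assume x: "0 < x"
    define e where "e = 2 * x / (H + 1)"
    have e: "0 < e" using x H by (simp add: e_def)
    have "2 * e * a \<le> 2 * e * (H + e * H / 2)"
      using growth[OF e] by (simp add: power2_eq_square algebra_simps)
    then have "a \<le> H + e * H / 2" using e by simp
    moreover have "e * H / 2 \<le> x" using x H by (simp add: e_def field_simps)
    ultimately show "a \<le> H + x" by linarith
  qed
qed

lemma eps_combination_ge_of_le:
  fixes a H \<epsilon> :: real
  assumes "a \<le> H" "0 < \<epsilon>" "\<epsilon> < 1"
  shows "- a * (\<epsilon> / (1 - \<epsilon>)) + H * (1 / (1 - \<epsilon>)) \<ge> H"
proof -
  have "a * \<epsilon> \<le> H * \<epsilon>" using assms by (intro mult_right_mono) auto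
  then have "H * (1 - \<epsilon>) \<le> - a * \<epsilon> + H" by (simp add: algebra_simps)
  moreover have "- a * (\<epsilon> / (1 - \<epsilon>)) + H * (1 / (1 - \<epsilon>)) = (- a * \<epsilon> + H) / (1 - \<epsilon>)"
    by (simp add: diff_divide_distrib)
  ultimately show ?thesis using assms by (simp add: pos_le_divide_eq)
qed

theorem lemma6:
  fixes Ss :: "('q::finite \<Rightarrow> real) set"
    and d Abar \<rho> \<eta> :: "'q \<Rightarrow> real"
    and A S X :: "nat \<Rightarrow> 'q \<Rightarrow> real"
    and tc :: "nat \<Rightarrow> nat"
    and \<epsilon> :: real
  assumes sys: "maxweight_system Ss d A Abar \<rho> S X"
    and dpos: "\<forall>q. 0 < d q"
    and overload: "\<rho> \<notin> stab_region Ss"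
    and tc_mono: "strict_mono tc"
    and eta_lim: "\<forall>q. ((\<lambda>c. X (tc c) q / real (tc c)) \<longlonglongrightarrow> \<eta> q)"
    and eta_H: "ereal (ip \<eta> (diagm d \<eta>)) =
                limsup (\<lambda>t. ereal (ip (\<lambda>q. X t q / real t) (diagm d (\<lambda>q. X t q / real t))))"
    and eps: "0 < \<epsilon>" "\<epsilon> < 1"
  shows "- (ip \<rho> (diagm d \<eta>) - (MAX s\<in>Ss. ip s (diagm d \<eta>))) * (\<epsilon> / (1 - \<epsilon>))
           + ip \<eta> (diagm d \<eta>) * (1 / (1 - \<epsilon>)) \<ge> ip \<eta> (diagm d \<eta>)"
proof (rule eps_combination_ge_of_le[OF _ eps])
  have d: "\<forall>q. 0 \<le> d q" using dpos by (simp add: less_imp_le)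
  show "ip \<rho> (diagm d \<eta>) - (MAX s\<in>Ss. ip s (diagm d \<eta>)) \<le> ip \<eta> (diagm d \<eta>)"
  proof (rule le_of_forall_growth_bound)
    show "0 \<le> ip \<eta> (diagm d \<eta>)" using ip_diagm_self_nonneg[OF d] .
    show "ip \<eta> (diagm d \<eta>) + 2 * e * (ip \<rho> (diagm d \<eta>) - (MAX s\<in>Ss. ip s (diagm d \<eta>)))
            \<le> (1 + e)\<^sup>2 * (ip \<eta> (diagm d \<eta>) + \<delta>)" if "0 < e" "0 < \<delta>" for e \<delta>
      using maxweight_drift_bound[OF sys d filterlim_subseq[OF tc_mono] eta_lim _ that]
        eta_H by simp
  qed
qed

end
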